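(* Let $A$ and $B$ be $d\times d$ matrices over $\mathbb{C}$, where $A$ has rank one, and let $\mathsf{A}=\{A,B\}$. Then either $\varrho(\mathsf{A})=\rho(B)$, or there exists an integer $n \geq 0$ such that $\varrho(\mathsf{A})=\rho(AB^n)^{1/(n+1)}$.
   Context: For a square matrix $A$, $\rho(A)$ denotes its ordinary spectral radius. For a nonempty bounded set $\mathsf{A}$ of $d\times d$ complex matrices, the joint spectral radius is \[\varrho(\mathsf{A})=\lim_{n \to \infty} \sup\left\{\left\|A_{i_n} \cdots A_{i_1}\right\|^{1/n} \colon A_{i_j} \in \mathsf{A}\right\},\] where $\|\cdot\|$ is any matrix norm (the limit exists and is independent of the norm). Here $B^0$ is the identity matrix. *)

theory Defs
  imports "Jordan_Normal_Form.Spectral_Radius" "Jordan_Normal_Form.DL_Rank"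
begin

text \<open>Frobenius norm of a complex matrix (a submultiplicative matrix norm;
  the joint spectral radius does not depend on the chosen norm).\<close>
definition frob_norm :: "complex mat \<Rightarrow> real" where
  "frob_norm M = sqrt (\<Sum>i<dim_row M. \<Sum>j<dim_col M. (cmod (M $$ (i, j)))\<^sup>2)"

definition word_prod :: "nat \<Rightarrow> complex mat list \<Rightarrow> complex mat" where
  "word_prod d ws = foldr (\<lambda>X Y. X * Y) ws (1\<^sub>m d)"

definition joint_spectral_radius :: "nat \<Rightarrow> complex mat set \<Rightarrow> real" where
  "joint_spectral_radius d S =
     lim (\<lambda>n. SUP ws \<in> {ws. length ws = n \<and> set ws \<subseteq> S}. frob_norm (word_prod d ws) powr (1 / real n))"

end

theory Submission
  imports Defs "HOL-Analysis.Convex"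
begin

text \<open>Write the rank-one matrix as \<open>A = u g\<^sup>T\<close>. Then \<open>A X A = (g\<^sup>T X u) A\<close>, and \<open>g\<^sup>T X u\<close> is an
  eigenvalue of \<open>A X\<close> (with eigenvector \<open>u\<close>). Hence in a product of \<open>A\<close>'s and \<open>B\<close>'s every block
  \<open>A B\<^sup>k\<close> between two consecutive \<open>A\<close>'s collapses to a scalar of modulus at most \<open>\<rho>(A B\<^sup>k)\<close>, so all
  products of length \<open>n\<close> have norm \<open>O(r\<^sup>n)\<close> whenever \<open>r > \<rho>(B)\<close> and \<open>r\<^sup>k\<^sup>+\<^sup>1 \<ge> \<rho>(A B\<^sup>k)\<close> for all \<open>k\<close>.
  Conversely, the powers of one product \<open>W\<close> of length \<open>p\<close> yield products of every length \<open>n\<close>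
  with norm \<open>\<ge> c \<rho>(W)\<^bsup>n/p\<^esup>\<close>. It remains to see that \<open>sup\<^sub>n \<rho>(A B\<^sup>n)\<^bsup>1/(n+1)\<^esup>\<close> is attained when it
  exceeds \<open>\<rho>(B)\<close>: for \<open>\<rho>(B) < s\<close> Gelfand's bound \<open>\<parallel>B\<^sup>n\<parallel> \<le> C s\<^sup>n\<close> gives
  \<open>\<rho>(A B\<^sup>n) \<le> \<parallel>A\<parallel> C s\<^sup>n\<close>, so only finitely many \<open>n\<close> can beat a value above \<open>s\<close>.\<close>

lemma index_mult_mat_sum:
  assumes "X \<in> carrier_mat n m" and "Y \<in> carrier_mat m p" and "i < n" and "j < p"
  shows "(X * Y) $$ (i, j) = (\<Sum>k<m. X $$ (i, k) * Y $$ (k, j))"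
proof -
  have "(X * Y) $$ (i, j) = row X i \<bullet> col Y j" using assms by simp
  also have "\<dots> = (\<Sum>k<m. X $$ (i, k) * Y $$ (k, j))"
    unfolding scalar_prod_def using assms by (simp add: lessThan_atLeast0)
  finally show ?thesis .
qed

lemma pow_mat_commute:
  assumes "A \<in> carrier_mat n n"
  shows "A ^\<^sub>m k * A = A * A ^\<^sub>m k"
proof (induction k)
  case 0
  then show ?case using assms by simp
next
  case (Suc k)
  have "A ^\<^sub>m Suc k * A = A ^\<^sub>m k * A * A" by simp
  also have "\<dots> = A * A ^\<^sub>m k * A" by (simp only: Suc)
  also have "\<dots> = A * A ^\<^sub>m Suc k" using assms by (simp add: assoc_mult_mat[of _ n n _ n _ n])
  finally show ?case .
qed

lemma pow_mat_smult:
  fixes A :: "'a :: comm_ring_1 mat"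
  assumes A: "A \<in> carrier_mat n n"
  shows "(c \<cdot>\<^sub>m A) ^\<^sub>m k = c ^ k \<cdot>\<^sub>m A ^\<^sub>m k"
proof (induction k)
  case 0
  then show ?case using A by (auto intro!: eq_matI)
next
  case (Suc k)
  have "(c \<cdot>\<^sub>m A) ^\<^sub>m Suc k = c ^ k \<cdot>\<^sub>m A ^\<^sub>m k * (c \<cdot>\<^sub>m A)" using Suc by simp
  also have "\<dots> = c ^ k \<cdot>\<^sub>m (A ^\<^sub>m k * (c \<cdot>\<^sub>m A))"
    by (rule mult_smult_assoc_mat) (use A in auto)
  also have "A ^\<^sub>m k * (c \<cdot>\<^sub>m A) = c \<cdot>\<^sub>m (A ^\<^sub>m k * A)"
    by (rule mult_smult_distrib) (use A in auto)
  also have "c ^ k \<cdot>\<^sub>m (c \<cdot>\<^sub>m (A ^\<^sub>m k * A)) = c ^ Suc k \<cdot>\<^sub>m A ^\<^sub>m Suc k"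
    by (auto intro!: eq_matI)
  finally show ?case .
qed

lemma frob_norm_carrier:
  "M \<in> carrier_mat n m \<Longrightarrow> frob_norm M = sqrt (\<Sum>i<n. \<Sum>j<m. (cmod (M $$ (i, j)))\<^sup>2)"
  unfolding frob_norm_def by auto

lemma frob_norm_nonneg: "0 \<le> frob_norm M"
  unfolding frob_norm_def by (simp add: sum_nonneg)

lemma frob_norm_mult:
  assumes X: "X \<in> carrier_mat n m" and Y: "Y \<in> carrier_mat m p"
  shows "frob_norm (X * Y) \<le> frob_norm X * frob_norm Y"
proof -
  let ?x = "\<lambda>i k. (cmod (X $$ (i, k)))\<^sup>2" and ?y = "\<lambda>k j. (cmod (Y $$ (k, j)))\<^sup>2"
  have entry: "(cmod ((X * Y) $$ (i, j)))\<^sup>2 \<le> (\<Sum>k<m. ?x i k) * (\<Sum>k<m. ?y k j)"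
    if "i < n" "j < p" for i j
  proof -
    have "cmod ((X * Y) $$ (i, j)) \<le> (\<Sum>k<m. cmod (X $$ (i, k)) * cmod (Y $$ (k, j)))"
      unfolding index_mult_mat_sum[OF X Y that] by (rule order_trans[OF norm_sum]) (simp add: norm_mult)
    then have "(cmod ((X * Y) $$ (i, j)))\<^sup>2 \<le> (\<Sum>k<m. cmod (X $$ (i, k)) * cmod (Y $$ (k, j)))\<^sup>2"
      by (intro power_mono) auto
    also have "\<dots> \<le> (\<Sum>k<m. ?x i k) * (\<Sum>k<m. ?y k j)"
      by (rule Cauchy_Schwarz_ineq_sum)
    finally show ?thesis .
  qed
  have "(\<Sum>i<n. \<Sum>j<p. (cmod ((X * Y) $$ (i, j)))\<^sup>2) \<le> (\<Sum>i<n. \<Sum>j<p. (\<Sum>k<m. ?x i k) * (\<Sum>k<m. ?y k j))"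
    by (intro sum_mono entry) auto
  also have "\<dots> = (\<Sum>i<n. \<Sum>k<m. ?x i k) * (\<Sum>j<p. \<Sum>k<m. ?y k j)"
    by (simp add: sum_product)
  also have "(\<Sum>j<p. \<Sum>k<m. ?y k j) = (\<Sum>k<m. \<Sum>j<p. ?y k j)"
    by (rule sum.swap)
  finally show ?thesis
    using X Y by (simp add: frob_norm_carrier[of _ n p] frob_norm_carrier[of _ n m]
        frob_norm_carrier[of _ m p] real_sqrt_le_mono flip: real_sqrt_mult)
qed

lemma frob_norm_smult: "frob_norm (c \<cdot>\<^sub>m M) = cmod c * frob_norm M"
proof -
  have "(\<Sum>i<dim_row M. \<Sum>j<dim_col M. (cmod ((c \<cdot>\<^sub>m M) $$ (i, j)))\<^sup>2)
      = (cmod c)\<^sup>2 * (\<Sum>i<dim_row M. \<Sum>j<dim_col M. (cmod (M $$ (i, j)))\<^sup>2)"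
    by (simp add: sum_distrib_left norm_mult power_mult_distrib)
  then show ?thesis unfolding frob_norm_def by (simp add: real_sqrt_mult)
qed

lemma frob_norm_one: "frob_norm (1\<^sub>m d) = sqrt d"
proof -
  have "(\<Sum>i<d. \<Sum>j<d. (cmod ((1\<^sub>m d :: complex mat) $$ (i, j)))\<^sup>2) = (\<Sum>i<d. \<Sum>j<d. if i = j then 1 else 0)"
    by (intro sum.cong refl) auto
  then show ?thesis unfolding frob_norm_def by simp
qed

lemma frob_norm_pos:
  assumes "i < dim_row M" and "j < dim_col M" and "M $$ (i, j) \<noteq> 0"
  shows "0 < frob_norm M"
proof -
  have "0 < (cmod (M $$ (i, j)))\<^sup>2" using assms by simp
  also have "\<dots> \<le> (\<Sum>j<dim_col M. (cmod (M $$ (i, j)))\<^sup>2)"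
    using assms by (intro member_le_sum) auto
  also have "\<dots> \<le> (\<Sum>i<dim_row M. \<Sum>j<dim_col M. (cmod (M $$ (i, j)))\<^sup>2)"
    using assms by (intro member_le_sum[where f = "\<lambda>i. \<Sum>j<dim_col M. (cmod (M $$ (i, j)))\<^sup>2"])
      (auto intro: sum_nonneg)
  finally show ?thesis unfolding frob_norm_def by simp
qed

lemma frob_norm_le_norm_bound:
  assumes M: "M \<in> carrier_mat n n" and b: "norm_bound M b"
  shows "frob_norm M \<le> n * b"
proof (cases "n = 0")
  case True
  then show ?thesis using M by (simp add: frob_norm_carrier)
next
  case False
  then have "cmod (M $$ (0, 0)) \<le> b" using b M unfolding norm_bound_def by auto
  then have "0 \<le> b" by (rule order_trans[OF norm_ge_zero])
  have "(\<Sum>i<n. \<Sum>j<n. (cmod (M $$ (i, j)))\<^sup>2) \<le> (\<Sum>i<n. \<Sum>j<n. b\<^sup>2)"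
    using b M unfolding norm_bound_def by (intro sum_mono power_mono) auto
  also have "\<dots> = (n * b)\<^sup>2" by (simp add: power2_eq_square)
  finally show ?thesis
    using M \<open>0 \<le> b\<close> by (simp add: frob_norm_carrier real_le_lsqrt)
qed

lemma spectral_radius_eigenvector:
  assumes "M \<in> carrier_mat n n" and "0 < n"
  obtains v mu where "eigenvector M v mu" and "cmod mu = spectral_radius M"
  using spectral_radius_mem_max(1)[OF assms] unfolding spectrum_def eigenvalue_def by auto

lemma eigenvector_le_spectral_radius:
  assumes M: "M \<in> carrier_mat n n" and ev: "eigenvector M v mu"
  shows "cmod mu \<le> spectral_radius M"
proof -
  have "eigenvalue M mu" using ev unfolding eigenvalue_def by auto
  then show ?thesis
    using spectral_radius_mem_max(2)[OF M eigenvalue_imp_nonzero_dim[OF M]] unfolding spectrum_def by auto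
qed

lemma spectral_radius_nonneg:
  assumes "M \<in> carrier_mat n n" and "0 < n"
  shows "0 \<le> spectral_radius M"
  using spectral_radius_eigenvector[OF assms] by (metis norm_ge_zero)

lemma eigenvector_smult_mat:
  assumes M: "M \<in> carrier_mat n n" and ev: "eigenvector M v mu"
  shows "eigenvector (c \<cdot>\<^sub>m M) v (c * mu)"
proof -
  have v: "v \<in> carrier_vec n" "v \<noteq> 0\<^sub>v n" and Mv: "M *\<^sub>v v = mu \<cdot>\<^sub>v v"
    using ev M unfolding eigenvector_def by auto
  have "(c \<cdot>\<^sub>m M) *\<^sub>v v = (c * mu) \<cdot>\<^sub>v v"
  proof (rule eq_vecI)
    fix i assume "i < dim_vec ((c * mu) \<cdot>\<^sub>v v)"
    then have i: "i < n" using v by simp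
    have "row M i \<bullet> v = mu * v $ i" using arg_cong[OF Mv, of "\<lambda>w. w $ i"] i M v by simp
    then show "((c \<cdot>\<^sub>m M) *\<^sub>v v) $ i = ((c * mu) \<cdot>\<^sub>v v) $ i" using i M v by simp
  qed (use M v in auto)
  then show ?thesis using v M unfolding eigenvector_def by auto
qed

lemma spectral_radius_smult_le:
  assumes M: "M \<in> carrier_mat n n" and n: "0 < n" and c: "c \<noteq> 0"
  shows "spectral_radius (c \<cdot>\<^sub>m M) \<le> cmod c * spectral_radius M"
proof -
  obtain v mu where ev: "eigenvector (c \<cdot>\<^sub>m M) v mu" and mu: "cmod mu = spectral_radius (c \<cdot>\<^sub>m M)"
    using spectral_radius_eigenvector[of "c \<cdot>\<^sub>m M" n] M n by auto
  have "inverse c \<cdot>\<^sub>m (c \<cdot>\<^sub>m M) = M" using c by (auto intro!: eq_matI)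
  then have "eigenvector M v (inverse c * mu)"
    using eigenvector_smult_mat[of "c \<cdot>\<^sub>m M" n v mu "inverse c"] M ev by simp
  then have "cmod (inverse c * mu) \<le> spectral_radius M" by (rule eigenvector_le_spectral_radius[OF M])
  then have "cmod mu / cmod c \<le> spectral_radius M"
    by (simp add: norm_mult norm_inverse divide_inverse mult.commute)
  then show ?thesis using mu c by (simp add: field_simps)
qed

lemma eigenvector_le_frob_norm:
  assumes M: "M \<in> carrier_mat n n" and ev: "eigenvector M v mu"
  shows "cmod mu \<le> frob_norm M"
proof -
  have v: "v \<in> carrier_vec n" "v \<noteq> 0\<^sub>v n" and Mv: "M *\<^sub>v v = mu \<cdot>\<^sub>v v"
    using ev M unfolding eigenvector_def by auto
  then obtain i where i: "i < n" "v $ i \<noteq> 0" by (metis carrier_vecD eq_vecI index_zero_vec)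
  define V where "V = mat n n (\<lambda>(i, j). v $ i)"
  have V: "V \<in> carrier_mat n n" unfolding V_def by simp
  have MV: "M * V = mu \<cdot>\<^sub>m V"
  proof (rule eq_matI)
    fix a b assume "a < dim_row (mu \<cdot>\<^sub>m V)" "b < dim_col (mu \<cdot>\<^sub>m V)"
    then have ab: "a < n" "b < n" using V by auto
    then have "col V b = v" using v unfolding V_def by (auto intro!: eq_vecI)
    then have "(M * V) $$ (a, b) = (M *\<^sub>v v) $ a" using M V ab by simp
    then show "(M * V) $$ (a, b) = (mu \<cdot>\<^sub>m V) $$ (a, b)" using Mv ab v unfolding V_def by simp
  qed (use M V in auto)
  have "0 < frob_norm V" using frob_norm_pos[of i V 0] i V unfolding V_def by simp
  moreover have "cmod mu * frob_norm V \<le> frob_norm M * frob_norm V"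
    using frob_norm_mult[OF M V] by (simp add: MV frob_norm_smult)
  ultimately show ?thesis by simp
qed

lemma spectral_radius_le_frob_norm:
  assumes "M \<in> carrier_mat n n" and "0 < n"
  shows "spectral_radius M \<le> frob_norm M"
  using spectral_radius_eigenvector[OF assms] eigenvector_le_frob_norm[OF assms(1)] by metis

lemma eigenvector_power_le_frob_norm_pow:
  assumes M: "M \<in> carrier_mat n n" and ev: "eigenvector M v mu"
  shows "cmod mu ^ k \<le> frob_norm (M ^\<^sub>m k)"
proof -
  have "eigenvector (M ^\<^sub>m k) v (mu ^ k)"
    using ev eigenvector_pow[OF M ev, of k] M unfolding eigenvector_def by auto
  from eigenvector_le_frob_norm[OF pow_carrier_mat[OF M] this] show ?thesis by (simp add: norm_power)
qed

text \<open>Gelfand's bound, from the Jordan normal form estimate for matrices of spectral radius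
  below one.\<close>

lemma frob_norm_pow_mat_le:
  assumes M: "M \<in> carrier_mat n n" and n: "0 < n" and s: "spectral_radius M < s"
  shows "\<exists>C>0. \<forall>k. frob_norm (M ^\<^sub>m k) \<le> C * s ^ k"
proof -
  have s0: "0 < s" using spectral_radius_nonneg[OF M n] s by linarith
  define M' where "M' = complex_of_real (1 / s) \<cdot>\<^sub>m M"
  have M': "M' \<in> carrier_mat n n" unfolding M'_def using M by simp
  have "spectral_radius M' \<le> cmod (complex_of_real (1 / s)) * spectral_radius M"
    unfolding M'_def using s0 by (intro spectral_radius_smult_le[OF M n]) simp
  also have "\<dots> = spectral_radius M / s" using s0 by (simp add: norm_divide)
  also have "\<dots> < 1" using s s0 by simp
  finally obtain b where b: "\<And>k. norm_bound (M' ^\<^sub>m k) b"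
    using spectral_radius_jnf_norm_bound_less_1_upper_triangular[OF M'] by blast
  have b1: "1 \<le> b" using b[of 0] M' n unfolding norm_bound_def by (force dest: spec[of _ 0])
  have "M = complex_of_real s \<cdot>\<^sub>m M'" unfolding M'_def using s0 M by (auto intro!: eq_matI)
  then have pow: "M ^\<^sub>m k = complex_of_real (s ^ k) \<cdot>\<^sub>m M' ^\<^sub>m k" for k
    by (simp add: pow_mat_smult[OF M'])
  show ?thesis
  proof (intro exI[of _ "n * b"] conjI allI)
    show "0 < n * b" using n b1 by simp
    fix k
    have "norm_bound (M ^\<^sub>m k) (s ^ k * b)"
      using b[of k] s0 unfolding norm_bound_def pow by (auto simp: norm_mult norm_power intro!: mult_left_mono)
    from frob_norm_le_norm_bound[OF pow_carrier_mat[OF M] this] show "frob_norm (M ^\<^sub>m k) \<le> n * b * s ^ k"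
      by (simp add: ac_simps)
  qed
qed

lemma word_prod_Nil [simp]: "word_prod d [] = 1\<^sub>m d"
  unfolding word_prod_def by simp

lemma word_prod_Cons [simp]: "word_prod d (x # ws) = x * word_prod d ws"
  unfolding word_prod_def by simp

lemma word_prod_carrier: "set ws \<subseteq> carrier_mat d d \<Longrightarrow> word_prod d ws \<in> carrier_mat d d"
  by (induction ws) auto

lemma word_prod_append:
  assumes "set ws \<subseteq> carrier_mat d d" and "set vs \<subseteq> carrier_mat d d"
  shows "word_prod d (ws @ vs) = word_prod d ws * word_prod d vs"
  using assms
proof (induction ws)
  case Nil
  then show ?case using word_prod_carrier[OF Nil(2)] by simp
next
  case (Cons x ws)
  then show ?case
    using word_prod_carrier[of ws d] word_prod_carrier[of vs d] by (simp add: assoc_mult_mat[of _ d d _ d _ d])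
qed

lemma word_prod_replicate: "B \<in> carrier_mat d d \<Longrightarrow> word_prod d (replicate k B) = B ^\<^sub>m k"
  by (induction k) (auto simp: pow_mat_commute)

lemma word_prod_concat_replicate:
  assumes w: "set w \<subseteq> carrier_mat d d"
  shows "word_prod d (concat (replicate q w)) = word_prod d w ^\<^sub>m q"
proof (induction q)
  case 0
  then show ?case using word_prod_carrier[OF w] by simp
next
  case (Suc q)
  have "set (concat (replicate q w)) \<subseteq> carrier_mat d d" using w by auto
  then show ?case
    using Suc word_prod_append[OF w] by (simp add: pow_mat_commute[OF word_prod_carrier[OF w]])
qed

lemma frob_norm_word_prod_le:
  assumes "set ws \<subseteq> carrier_mat d d" and "\<And>x. x \<in> set ws \<Longrightarrow> frob_norm x \<le> M" and "0 \<le> M"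
  shows "frob_norm (word_prod d ws) \<le> sqrt d * M ^ length ws"
  using assms
proof (induction ws)
  case Nil
  then show ?case by (simp add: frob_norm_one)
next
  case (Cons x ws)
  then have x: "x \<in> carrier_mat d d" and ws: "set ws \<subseteq> carrier_mat d d" by auto
  have "frob_norm (x * word_prod d ws) \<le> frob_norm x * frob_norm (word_prod d ws)"
    by (rule frob_norm_mult[OF x word_prod_carrier[OF ws]])
  also have "\<dots> \<le> M * (sqrt d * M ^ length ws)"
    using Cons ws by (intro mult_mono) (auto simp: frob_norm_nonneg)
  finally show ?case by (simp add: ac_simps)
qed

lemma frob_norm_word_prod_take:
  assumes w: "set w \<subseteq> carrier_mat d d" and M: "\<And>x. x \<in> set w \<Longrightarrow> frob_norm x \<le> M" "0 \<le> M"
  shows "frob_norm (word_prod d w) \<le> frob_norm (word_prod d (take n w)) * (sqrt d * M ^ (length w - n))"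
proof -
  have take: "set (take n w) \<subseteq> carrier_mat d d" and drop: "set (drop n w) \<subseteq> carrier_mat d d"
    using order_trans[OF set_take_subset w] order_trans[OF set_drop_subset w] .
  have "word_prod d w = word_prod d (take n w) * word_prod d (drop n w)"
    using word_prod_append[OF take drop] by simp
  also have "frob_norm \<dots> \<le> frob_norm (word_prod d (take n w)) * frob_norm (word_prod d (drop n w))"
    by (rule frob_norm_mult[OF word_prod_carrier[OF take] word_prod_carrier[OF drop]])
  also have "\<dots> \<le> frob_norm (word_prod d (take n w)) * (sqrt d * M ^ (length w - n))"
  proof (intro mult_left_mono frob_norm_nonneg)
    have "\<And>x. x \<in> set (drop n w) \<Longrightarrow> frob_norm x \<le> M" using M(1) set_drop_subset[of n w] by blast
    from frob_norm_word_prod_le[OF drop this M(2)]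
    show "frob_norm (word_prod d (drop n w)) \<le> sqrt d * M ^ (length w - n)" by simp
  qed
  finally show ?thesis .
qed

subsection \<open>Lower bound from the spectral radius of a single word\<close>

lemma div_add_one_mult_bounds:
  fixes n p :: nat
  assumes "0 < p"
  shows "n \<le> (n div p + 1) * p" and "(n div p + 1) * p \<le> n + p"
proof -
  have "n div p * p \<le> n" "n < n div p * p + p"
    using div_mult_mod_eq[of n p] mod_less_divisor[OF assms, of n] by linarith+
  then show "n \<le> (n div p + 1) * p" "(n div p + 1) * p \<le> n + p"
    unfolding distrib_right mult_1 by linarith+
qed

lemma power_le_power_between:
  fixes L :: real
  assumes "0 < L" and "n \<le> m" and "m \<le> n + p"
  shows "min 1 (L ^ p) * L ^ n \<le> L ^ m"
proof (cases "1 \<le> L")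
  case True
  then have "min 1 (L ^ p) * L ^ n \<le> L ^ n" using assms by (intro mult_left_le_one_le) auto
  also have "\<dots> \<le> L ^ m" using True assms by (intro power_increasing) auto
  finally show ?thesis .
next
  case False
  then have "min 1 (L ^ p) * L ^ n \<le> L ^ (n + p)" using assms by (simp add: power_add mult_right_mono)
  also have "\<dots> \<le> L ^ m" using False assms by (intro power_decreasing) auto
  finally show ?thesis .
qed

text \<open>A prefix of length \<open>n\<close> of \<open>w\<^sup>q\<close>, \<open>q = n div |w| + 1\<close>, loses at most one copy of \<open>w\<close>.\<close>

lemma word_power_prefix_lower_bound:
  assumes S: "S \<subseteq> carrier_mat d d" and M: "\<And>x. x \<in> S \<Longrightarrow> frob_norm x \<le> M" "1 \<le> M"
    and w: "w \<noteq> []" "set w \<subseteq> S" and ev: "eigenvector (word_prod d w) v mu"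
  shows "\<exists>ws. length ws = n \<and> set ws \<subseteq> S \<and>
    cmod mu ^ (n div length w + 1) \<le> frob_norm (word_prod d ws) * (sqrt d * M ^ length w)"
proof -
  define p where "p = length w"
  define q where "q = n div p + 1"
  define u where "u = concat (replicate q w)"
  have p: "0 < p" using w(1) unfolding p_def by simp
  have wc: "set w \<subseteq> carrier_mat d d" using w(2) S by blast
  have u: "set u \<subseteq> S" "length u = q * p"
    unfolding u_def p_def using w(2) by (auto simp: length_concat sum_list_replicate)
  have uc: "set u \<subseteq> carrier_mat d d" using u(1) S by blast
  have q: "n \<le> q * p" "q * p \<le> n + p" unfolding q_def by (rule div_add_one_mult_bounds[OF p])+
  have "cmod mu ^ q \<le> frob_norm (word_prod d u)"
    using eigenvector_power_le_frob_norm_pow[OF word_prod_carrier[OF wc] ev]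
    unfolding u_def word_prod_concat_replicate[OF wc] .
  also have "\<dots> \<le> frob_norm (word_prod d (take n u)) * (sqrt d * M ^ (length u - n))"
    using M u(1) by (intro frob_norm_word_prod_take[OF uc]) auto
  also have "\<dots> \<le> frob_norm (word_prod d (take n u)) * (sqrt d * M ^ p)"
    using M(2) u(2) q by (intro mult_left_mono frob_norm_nonneg power_increasing) auto
  finally have "cmod mu ^ q \<le> frob_norm (word_prod d (take n u)) * (sqrt d * M ^ p)" .
  moreover have "length (take n u) = n" "set (take n u) \<subseteq> S"
    using u q(1) set_take_subset[of n u] by auto
  ultimately show ?thesis unfolding p_def q_def by blast
qed

lemma word_prod_lower_bound:
  assumes S: "S \<subseteq> carrier_mat d d" "finite S" and d: "0 < d"
    and w: "w \<noteq> []" "set w \<subseteq> S" and L: "0 < L"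
    and rho: "spectral_radius (word_prod d w) = L ^ length w"
  shows "\<exists>c>0. \<forall>n. \<exists>ws. length ws = n \<and> set ws \<subseteq> S \<and> c * L ^ n \<le> frob_norm (word_prod d ws)"
proof -
  define p where "p = length w"
  have p: "0 < p" using w(1) unfolding p_def by simp
  have wc: "set w \<subseteq> carrier_mat d d" using w(2) S(1) by blast
  obtain v mu where ev: "eigenvector (word_prod d w) v mu" and mu: "cmod mu = L ^ p"
    using spectral_radius_eigenvector[OF word_prod_carrier[OF wc] d] rho unfolding p_def by metis
  define M where "M = max 1 (Max (frob_norm ` S))"
  have M: "\<And>x. x \<in> S \<Longrightarrow> frob_norm x \<le> M" "1 \<le> M"
    unfolding M_def le_max_iff_disj using S(2) by (auto intro: Max_ge finite_imageI)
  define D where "D = sqrt d * M ^ p"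
  have D: "0 < D" using d M(2) unfolding D_def by simp
  show ?thesis
  proof (intro exI[of _ "min 1 (L ^ p) / D"] conjI allI)
    show "0 < min 1 (L ^ p) / D" using D L by simp
    fix n
    obtain ws where ws: "length ws = n" "set ws \<subseteq> S"
      and le: "cmod mu ^ (n div p + 1) \<le> frob_norm (word_prod d ws) * D"
      using word_power_prefix_lower_bound[OF S(1) M w ev, of n] unfolding p_def D_def by blast
    have "min 1 (L ^ p) * L ^ n \<le> L ^ ((n div p + 1) * p)"
      using L div_add_one_mult_bounds[OF p] by (rule power_le_power_between)
    also have "\<dots> = cmod mu ^ (n div p + 1)"
      unfolding mu by (metis power_mult mult.commute)
    also note le
    finally have "min 1 (L ^ p) / D * L ^ n \<le> frob_norm (word_prod d ws)"
      using D by (simp add: field_simps)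
    with ws show "\<exists>ws. length ws = n \<and> set ws \<subseteq> S \<and> min 1 (L ^ p) / D * L ^ n \<le> frob_norm (word_prod d ws)"
      by blast
  qed
qed

subsection \<open>Upper bound when \<open>A\<close> absorbs the powers of \<open>B\<close>\<close>

context
  fixes A B :: "complex mat" and d :: nat and r C :: real and c :: "nat \<Rightarrow> complex"
  assumes A: "A \<in> carrier_mat d d" and B: "B \<in> carrier_mat d d"
    and r: "0 < r" and C: "0 < C"
    and pow_bound: "\<And>k. frob_norm (B ^\<^sub>m k) \<le> C * r ^ k"
    and sandwich: "\<And>k. A * B ^\<^sub>m k * A = c k \<cdot>\<^sub>m A"
    and sandwich_bound: "\<And>k. cmod (c k) \<le> r ^ (k + 1)"
begin

lemma frob_norm_A_pow_word_le:
  "set ws \<subseteq> {A, B} \<Longrightarrow> frob_norm (A * B ^\<^sub>m k * word_prod d ws) \<le> frob_norm A * C * r ^ (k + length ws)"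
proof (induction ws arbitrary: k)
  case Nil
  have "frob_norm (A * B ^\<^sub>m k) \<le> frob_norm A * frob_norm (B ^\<^sub>m k)"
    by (rule frob_norm_mult[OF A pow_carrier_mat[OF B]])
  also have "\<dots> \<le> frob_norm A * (C * r ^ k)"
    by (intro mult_left_mono pow_bound frob_norm_nonneg)
  finally show ?case using A B by simp
next
  case (Cons x ws)
  then have ws: "set ws \<subseteq> {A, B}" and x: "x = A \<or> x = B" by auto
  have P: "word_prod d ws \<in> carrier_mat d d" using ws A B by (intro word_prod_carrier) auto
  from x show ?case
  proof
    assume "x = A"
    have "A * B ^\<^sub>m k * (A * word_prod d ws) = A * B ^\<^sub>m k * A * word_prod d ws"
      using assoc_mult_mat[of "A * B ^\<^sub>m k" d d A d "word_prod d ws" d] A B P by simp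
    also have "\<dots> = c k \<cdot>\<^sub>m (A * B ^\<^sub>m 0 * word_prod d ws)"
      unfolding sandwich using A B P by (simp add: mult_smult_assoc_mat[of _ d d _ d])
    finally have "frob_norm (A * B ^\<^sub>m k * word_prod d (x # ws))
        = cmod (c k) * frob_norm (A * B ^\<^sub>m 0 * word_prod d ws)"
      using \<open>x = A\<close> by (simp add: frob_norm_smult)
    also have "\<dots> \<le> r ^ (k + 1) * (frob_norm A * C * r ^ (0 + length ws))"
      using r by (intro mult_mono sandwich_bound Cons.IH[OF ws]) (auto simp: frob_norm_nonneg)
    finally show ?thesis by (simp add: power_add ac_simps)
  next
    assume "x = B"
    then have "A * B ^\<^sub>m k * word_prod d (x # ws) = A * B ^\<^sub>m k * B * word_prod d ws"
      using assoc_mult_mat[of "A * B ^\<^sub>m k" d d B d "word_prod d ws" d] A B P by simp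
    also have "A * B ^\<^sub>m k * B = A * B ^\<^sub>m Suc k"
      using assoc_mult_mat[of A d d "B ^\<^sub>m k" d B d] A B by simp
    finally show ?thesis using Cons.IH[OF ws, of "Suc k"] by simp
  qed
qed

lemma frob_norm_pow_word_le:
  "set ws \<subseteq> {A, B} \<Longrightarrow>
    frob_norm (B ^\<^sub>m k * word_prod d ws) \<le> max C (C * C * frob_norm A / r) * r ^ (k + length ws)"
proof (induction ws arbitrary: k)
  case Nil
  have le: "C * r ^ k \<le> max C (C * C * frob_norm A / r) * r ^ k"
    using r by (intro mult_right_mono) auto
  show ?case using order_trans[OF pow_bound le] B by simp
next
  case (Cons x ws)
  then have ws: "set ws \<subseteq> {A, B}" and x: "x = A \<or> x = B" by auto
  have P: "word_prod d ws \<in> carrier_mat d d" using ws A B by (intro word_prod_carrier) auto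
  from x show ?case
  proof
    assume "x = A"
    have "frob_norm (B ^\<^sub>m k * (A * word_prod d ws)) \<le> frob_norm (B ^\<^sub>m k) * frob_norm (A * B ^\<^sub>m 0 * word_prod d ws)"
      using frob_norm_mult[OF pow_carrier_mat[OF B], of "A * word_prod d ws" d] A B P by simp
    also have "\<dots> \<le> (C * r ^ k) * (frob_norm A * C * r ^ (0 + length ws))"
      using C r by (intro mult_mono pow_bound frob_norm_A_pow_word_le ws) (auto simp: frob_norm_nonneg)
    also have "\<dots> = C * C * frob_norm A / r * r ^ (k + length (x # ws))"
      using r by (simp add: power_add field_simps)
    also have "\<dots> \<le> max C (C * C * frob_norm A / r) * r ^ (k + length (x # ws))"
      using r by (intro mult_right_mono) auto
    finally show ?thesis using \<open>x = A\<close> by simp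
  next
    assume "x = B"
    then have "B ^\<^sub>m k * word_prod d (x # ws) = B ^\<^sub>m Suc k * word_prod d ws"
      using B P by (simp add: assoc_mult_mat[of _ d d _ d _ d])
    then show ?thesis using Cons.IH[OF ws, of "Suc k"] by simp
  qed
qed

lemma frob_norm_word_le:
  "\<exists>K>0. \<forall>ws. set ws \<subseteq> {A, B} \<longrightarrow> frob_norm (word_prod d ws) \<le> K * r ^ length ws"
proof (intro exI[of _ "max C (C * C * frob_norm A / r)"] conjI allI impI)
  show "0 < max C (C * C * frob_norm A / r)" using C by simp
  fix ws assume ws: "set ws \<subseteq> {A, B}"
  then have "word_prod d ws \<in> carrier_mat d d" using A B by (intro word_prod_carrier) auto
  then have "word_prod d ws = B ^\<^sub>m 0 * word_prod d ws" using B by simp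
  then show "frob_norm (word_prod d ws) \<le> max C (C * C * frob_norm A / r) * r ^ length ws"
    using frob_norm_pow_word_le[OF ws, of 0] by simp
qed

end

subsection \<open>Squeezing the joint spectral radius\<close>

definition max_word_norm_root :: "nat \<Rightarrow> complex mat set \<Rightarrow> nat \<Rightarrow> real" where
  "max_word_norm_root d S n =
     (SUP ws \<in> {ws. length ws = n \<and> set ws \<subseteq> S}. frob_norm (word_prod d ws) powr (1 / real n))"

lemma joint_spectral_radius_eq_lim: "joint_spectral_radius d S = lim (max_word_norm_root d S)"
  unfolding joint_spectral_radius_def max_word_norm_root_def ..

lemma finite_words: "finite S \<Longrightarrow> finite {ws. length ws = n \<and> set ws \<subseteq> S}"
  using finite_lists_length_eq[of S n] by (simp add: conj_commute)

lemma max_word_norm_root_ge: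
  assumes "finite S" and "length ws = n" and "set ws \<subseteq> S"
  shows "frob_norm (word_prod d ws) powr (1 / real n) \<le> max_word_norm_root d S n"
  unfolding max_word_norm_root_def using assms
  by (intro cSUP_upper bdd_above_finite finite_imageI finite_words) auto

lemma max_word_norm_root_le:
  assumes "S \<noteq> {}"
    and "\<And>ws. length ws = n \<Longrightarrow> set ws \<subseteq> S \<Longrightarrow> frob_norm (word_prod d ws) powr (1 / real n) \<le> b"
  shows "max_word_norm_root d S n \<le> b"
proof -
  obtain x where "x \<in> S" using assms(1) by blast
  then have "{ws. length ws = n \<and> set ws \<subseteq> S} \<noteq> {}" by (auto intro!: exI[of _ "replicate n x"])
  then show ?thesis unfolding max_word_norm_root_def by (rule cSUP_least) (use assms(2) in auto)
qed

lemma max_word_norm_root_nonneg: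
  assumes "finite S" and "S \<noteq> {}"
  shows "0 \<le> max_word_norm_root d S n"
proof -
  obtain x where "x \<in> S" using assms(2) by blast
  then have "frob_norm (word_prod d (replicate n x)) powr (1 / real n) \<le> max_word_norm_root d S n"
    by (intro max_word_norm_root_ge[OF assms(1)]) auto
  then show ?thesis by (rule order_trans[OF powr_ge_zero])
qed

lemma powr_inverse_power:
  fixes x :: real
  assumes "0 \<le> x" and "0 < m"
  shows "(x powr (1 / real m)) ^ m = x"
proof (cases "x = 0")
  case False
  then have "(x powr (1 / real m)) ^ m = (x powr (1 / real m)) powr real m"
    using assms by (simp add: powr_realpow)
  also have "\<dots> = x" using assms by (simp add: powr_powr)
  finally show ?thesis .
qed (use assms in simp)

lemma spectral_radius_powr_inverse_power:
  assumes "M \<in> carrier_mat n n" and "0 < n"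
  shows "(spectral_radius M powr (1 / real (k + 1))) ^ (k + 1) = spectral_radius M"
  using spectral_radius_nonneg[OF assms] by (intro powr_inverse_power) auto

lemma mult_power_powr_inverse:
  fixes K y :: real
  assumes "0 < y" and "0 < n"
  shows "(K * y ^ n) powr (1 / real n) = K powr (1 / real n) * y"
proof -
  have "(y ^ n) powr (1 / real n) = (y powr real n) powr (1 / real n)"
    using assms by (simp add: powr_realpow)
  also have "\<dots> = y" using assms by (simp add: powr_powr)
  finally show ?thesis by (simp add: powr_mult)
qed

lemma LIMSEQ_powr_inverse_const:
  fixes K :: real
  assumes "0 < K"
  shows "(\<lambda>n. K powr (1 / real n)) \<longlonglongrightarrow> 1"
proof -
  have "(\<lambda>n. K powr (1 / real n)) \<longlonglongrightarrow> K powr 0"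
    by (rule tendsto_powr[OF tendsto_const]) (use assms lim_1_over_n in auto)
  then show ?thesis using assms by simp
qed

lemma max_word_norm_root_eventually_less:
  assumes S: "S \<noteq> {}" and K: "0 < K" and r: "0 < r" "r < a"
    and bound: "\<And>ws. set ws \<subseteq> S \<Longrightarrow> frob_norm (word_prod d ws) \<le> K * r ^ length ws"
  shows "\<forall>\<^sub>F n in sequentially. max_word_norm_root d S n < a"
proof -
  have "(\<lambda>n. K powr (1 / real n) * r) \<longlonglongrightarrow> 1 * r"
    by (intro tendsto_mult_right LIMSEQ_powr_inverse_const K)
  then have "\<forall>\<^sub>F n in sequentially. K powr (1 / real n) * r < a"
    using r by (intro order_tendstoD(2)) auto
  then show ?thesis
    using eventually_gt_at_top[of 0]
  proof eventually_elim
    case (elim n)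
    have "max_word_norm_root d S n \<le> K powr (1 / real n) * r"
    proof (rule max_word_norm_root_le[OF S])
      fix ws assume ws: "length ws = n" "set ws \<subseteq> S"
      then have "frob_norm (word_prod d ws) powr (1 / real n) \<le> (K * r ^ n) powr (1 / real n)"
        using bound[of ws] by (intro powr_mono2) (auto simp: frob_norm_nonneg)
      also have "\<dots> = K powr (1 / real n) * r" using r elim by (intro mult_power_powr_inverse) auto
      finally show "frob_norm (word_prod d ws) powr (1 / real n) \<le> K powr (1 / real n) * r" .
    qed
    then show ?case using elim by simp
  qed
qed

lemma max_word_norm_root_eventually_greater:
  assumes S: "finite S" and c: "0 < c" and L: "0 < L" "a < L"
    and bound: "\<And>n. \<exists>ws. length ws = n \<and> set ws \<subseteq> S \<and> c * L ^ n \<le> frob_norm (word_prod d ws)"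
  shows "\<forall>\<^sub>F n in sequentially. a < max_word_norm_root d S n"
proof -
  have "(\<lambda>n. c powr (1 / real n) * L) \<longlonglongrightarrow> 1 * L"
    by (intro tendsto_mult_right LIMSEQ_powr_inverse_const c)
  then have "\<forall>\<^sub>F n in sequentially. a < c powr (1 / real n) * L"
    using L by (intro order_tendstoD(1)) auto
  then show ?thesis
    using eventually_gt_at_top[of 0]
  proof eventually_elim
    case (elim n)
    obtain ws where ws: "length ws = n" "set ws \<subseteq> S" "c * L ^ n \<le> frob_norm (word_prod d ws)"
      using bound by blast
    have "c powr (1 / real n) * L = (c * L ^ n) powr (1 / real n)"
      using L elim by (intro mult_power_powr_inverse[symmetric]) auto
    also have "\<dots> \<le> frob_norm (word_prod d ws) powr (1 / real n)"
      using ws c L by (intro powr_mono2) auto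
    also have "\<dots> \<le> max_word_norm_root d S n" by (rule max_word_norm_root_ge[OF S ws(1,2)])
    finally show ?case using elim by simp
  qed
qed

lemma joint_spectral_radius_eqI:
  assumes S: "finite S" "S \<noteq> {}" and L: "0 \<le> L"
    and upper: "\<And>r. L < r \<Longrightarrow> \<exists>K>0. \<forall>ws. set ws \<subseteq> S \<longrightarrow> frob_norm (word_prod d ws) \<le> K * r ^ length ws"
    and lower: "0 < L \<Longrightarrow>
      \<exists>c>0. \<forall>n. \<exists>ws. length ws = n \<and> set ws \<subseteq> S \<and> c * L ^ n \<le> frob_norm (word_prod d ws)"
  shows "joint_spectral_radius d S = L"
proof -
  have "max_word_norm_root d S \<longlonglongrightarrow> L"
  proof (rule order_tendstoI)
    fix a assume "L < a"
    then have r: "0 < (L + a) / 2" "L < (L + a) / 2" "(L + a) / 2 < a" using L by auto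
    then obtain K where "0 < K" "\<forall>ws. set ws \<subseteq> S \<longrightarrow> frob_norm (word_prod d ws) \<le> K * ((L + a) / 2) ^ length ws"
      using upper by blast
    then show "\<forall>\<^sub>F n in sequentially. max_word_norm_root d S n < a"
      using r by (intro max_word_norm_root_eventually_less[OF S(2), where r = "(L + a) / 2"]) auto
  next
    fix a assume a: "a < L"
    show "\<forall>\<^sub>F n in sequentially. a < max_word_norm_root d S n"
    proof (cases "L = 0")
      case True
      then have "\<forall>n. a < max_word_norm_root d S n"
        using a max_word_norm_root_nonneg[OF S] by (auto intro: less_le_trans)
      then show ?thesis by (simp add: always_eventually)
    next
      case False
      then have "0 < L" using L by simp
      then obtain c where c: "0 < c" "\<forall>n. \<exists>ws. length ws = n \<and> set ws \<subseteq> S \<and> c * L ^ n \<le> frob_norm (word_prod d ws)"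
        using lower by blast
      show ?thesis
        by (rule max_word_norm_root_eventually_greater[OF S(1) c(1) \<open>0 < L\<close> a]) (use c(2) in blast)
    qed
  qed
  then show ?thesis unfolding joint_spectral_radius_eq_lim by (rule limI)
qed

subsection \<open>Rank-one matrices\<close>

lemma (in vec_space) lin_dep_pair_smult:
  assumes uw: "u \<in> carrier_vec n" "w \<in> carrier_vec n" and u0: "u \<noteq> 0\<^sub>v n" and wu: "w \<noteq> u"
    and dep: "lin_dep {u, w}"
  shows "\<exists>t. w = t \<cdot>\<^sub>v u"
proof -
  have M: "mat_of_cols n [u, w] \<in> carrier_mat n 2"
    using mat_of_cols_carrier[of n "[u, w]"] by (simp add: numeral_2_eq_2)
  have "cols (mat_of_cols n [u, w]) = [u, w]" using uw by simp
  then obtain v where v: "v \<in> carrier_vec 2" "v \<noteq> 0\<^sub>v 2" "mat_of_cols n [u, w] *\<^sub>v v = 0\<^sub>v n"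
    using lin_depE[OF M] dep wu by auto
  have comb: "u $ i * v $ 0 + w $ i * v $ 1 = 0" if "i < n" for i
    using arg_cong[OF v(3), of "\<lambda>x. x $ i"] that v(1) uw
    by (simp add: mat_of_cols_def scalar_prod_def numeral_2_eq_2 atLeast0LessThan lessThan_Suc)
      (simp add: add.commute)
  have "v $ 1 \<noteq> 0"
  proof
    assume v1: "v $ 1 = 0"
    obtain i where i: "i < n" "u $ i \<noteq> 0" using uw u0 by (metis carrier_vecD eq_vecI index_zero_vec)
    then have "v $ 0 = 0" using comb[OF i(1)] v1 by simp
    then have "v = 0\<^sub>v 2" using v(1) v1 by (intro eq_vecI) (auto simp: less_2_cases_iff)
    then show False using v(2) by simp
  qed
  then have "w = (- v $ 0 / v $ 1) \<cdot>\<^sub>v u"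
    using comb uw by (intro eq_vecI) (auto simp: field_simps add_eq_0_iff)
  then show ?thesis by blast
qed

lemma rank_one_col_parallel:
  fixes A :: "complex mat"
  assumes A: "A \<in> carrier_mat d d" and rank: "vec_space.rank d A = 1"
    and j0: "j0 < d" and u0: "col A j0 \<noteq> 0\<^sub>v d" and j: "j < d"
  shows "\<exists>t. col A j = t \<cdot>\<^sub>v col A j0"
proof (cases "col A j = col A j0")
  case True
  then show ?thesis by (intro exI[of _ 1]) auto
next
  case False
  interpret vec_space "TYPE(complex)" d .
  have "{col A j0, col A j} \<subseteq> set (cols A)" using j j0 A by (auto simp: cols_def)
  moreover have "card {col A j0, col A j} = 2" using False by simp
  ultimately have "lin_dep {col A j0, col A j}"
    using rank_ge_card_indpt[OF A, of "{col A j0, col A j}"] rank by auto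
  then show ?thesis using lin_dep_pair_smult[of "col A j0" "col A j"] A j0 j u0 False by auto
qed

lemma rank_one_nonzero_entry:
  fixes A :: "complex mat"
  assumes A: "A \<in> carrier_mat d d" and rank: "vec_space.rank d A = 1"
  shows "\<exists>i j. i < d \<and> j < d \<and> A $$ (i, j) \<noteq> 0"
proof -
  have "vec_space.rank d (0\<^sub>m d d :: complex mat) = 0" by (rule vec_space.rank_0I)
  then have "A \<noteq> 0\<^sub>m d d" using rank by auto
  then show ?thesis using A by (metis carrier_matD(1,2) eq_matI index_zero_mat(1-3))
qed

lemma rank_one_dim_pos:
  fixes A :: "complex mat"
  assumes "A \<in> carrier_mat d d" and "vec_space.rank d A = 1"
  shows "0 < d"
  using rank_one_nonzero_entry[OF assms] by auto

lemma rank_one_factorization: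
  fixes A :: "complex mat"
  assumes A: "A \<in> carrier_mat d d" and rank: "vec_space.rank d A = 1"
  shows "\<exists>u g. u \<in> carrier_vec d \<and> u \<noteq> 0\<^sub>v d \<and> (\<forall>i<d. \<forall>j<d. A $$ (i, j) = u $ i * g j)"
proof -
  obtain i0 j0 where ij: "i0 < d" "j0 < d" "A $$ (i0, j0) \<noteq> 0"
    using rank_one_nonzero_entry[OF A rank] by blast
  define u where "u = col A j0"
  have u: "u \<in> carrier_vec d" "u \<noteq> 0\<^sub>v d"
    using A ij unfolding u_def by (auto dest: arg_cong[of _ _ "\<lambda>x. x $ i0"])
  have "\<forall>j. \<exists>t. j < d \<longrightarrow> col A j = t \<cdot>\<^sub>v u"
    using rank_one_col_parallel[OF A rank ij(2)] u(2) unfolding u_def by blast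
  then obtain g where g: "\<And>j. j < d \<Longrightarrow> col A j = g j \<cdot>\<^sub>v u" by metis
  have "A $$ (i, j) = u $ i * g j" if "i < d" "j < d" for i j
    using arg_cong[OF g[OF that(2)], of "\<lambda>x. x $ i"] that A u(1) by (simp add: mult.commute)
  then show ?thesis using u by blast
qed

lemma outer_product_sandwich:
  assumes A: "A \<in> carrier_mat d d" and u: "u \<in> carrier_vec d" "u \<noteq> 0\<^sub>v d"
    and Aug: "\<And>i j. i < d \<Longrightarrow> j < d \<Longrightarrow> A $$ (i, j) = u $ i * g j"
    and X: "X \<in> carrier_mat d d"
  defines "t \<equiv> \<Sum>l<d. \<Sum>k<d. g k * X $$ (k, l) * u $ l"
  shows "A * X * A = t \<cdot>\<^sub>m A" and "cmod t \<le> spectral_radius (A * X)"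
proof -
  have AX: "A * X \<in> carrier_mat d d" using A X by simp
  have AX_entry: "(A * X) $$ (i, l) = u $ i * (\<Sum>k<d. g k * X $$ (k, l))" if "i < d" "l < d" for i l
    using that by (simp add: index_mult_mat_sum[OF A X] Aug sum_distrib_left ac_simps)
  have "(A * X * A) $$ (i, j) = (t \<cdot>\<^sub>m A) $$ (i, j)" if "i < d" "j < d" for i j
  proof -
    have "(A * X * A) $$ (i, j) = (\<Sum>l<d. (A * X) $$ (i, l) * A $$ (l, j))"
      by (rule index_mult_mat_sum[OF AX A that])
    also have "\<dots> = (\<Sum>l<d. u $ i * (\<Sum>k<d. g k * X $$ (k, l)) * (u $ l * g j))"
      using that by (intro sum.cong refl) (simp add: AX_entry Aug)
    also have "\<dots> = (t \<cdot>\<^sub>m A) $$ (i, j)"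
      using that A by (simp add: Aug t_def sum_distrib_left sum_distrib_right ac_simps)
    finally show ?thesis .
  qed
  then show "A * X * A = t \<cdot>\<^sub>m A" using AX A by (intro eq_matI) auto
  have "((A * X) *\<^sub>v u) $ i = (t \<cdot>\<^sub>v u) $ i" if "i < d" for i
  proof -
    have "((A * X) *\<^sub>v u) $ i = row (A * X) i \<bullet> u"
      by (rule index_mult_mat_vec) (use that A in simp)
    also have "\<dots> = (\<Sum>l<d. (A * X) $$ (i, l) * u $ l)"
      unfolding scalar_prod_def lessThan_atLeast0 using that A X u
      by (intro sum.cong refl) (auto simp: carrier_matD)
    also have "\<dots> = (\<Sum>l<d. u $ i * (\<Sum>k<d. g k * X $$ (k, l)) * u $ l)"
      using that by (intro sum.cong refl) (simp add: AX_entry)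
    also have "\<dots> = (t \<cdot>\<^sub>v u) $ i"
      using that u by (simp add: t_def sum_distrib_left sum_distrib_right ac_simps)
    finally show ?thesis .
  qed
  then have "eigenvector (A * X) u t"
    using AX u unfolding eigenvector_def by (auto intro!: eq_vecI)
  then show "cmod t \<le> spectral_radius (A * X)" by (rule eigenvector_le_spectral_radius[OF AX])
qed

lemma rank_one_sandwich:
  fixes A :: "complex mat"
  assumes A: "A \<in> carrier_mat d d" and rank: "vec_space.rank d A = 1" and X: "X \<in> carrier_mat d d"
  shows "\<exists>t. A * X * A = t \<cdot>\<^sub>m A \<and> cmod t \<le> spectral_radius (A * X)"
proof -
  obtain u g where "u \<in> carrier_vec d" "u \<noteq> 0\<^sub>v d" "\<And>i j. i < d \<Longrightarrow> j < d \<Longrightarrow> A $$ (i, j) = u $ i * g j"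
    using rank_one_factorization[OF A rank] by blast
  from outer_product_sandwich[OF A this X] show ?thesis by blast
qed

lemma joint_spectral_radius_rank_one_eq:
  assumes A: "A \<in> carrier_mat d d" and B: "B \<in> carrier_mat d d" and rank: "vec_space.rank d A = 1"
    and LB: "spectral_radius B \<le> L"
    and LAB: "\<And>k. spectral_radius (A * B ^\<^sub>m k) powr (1 / real (k + 1)) \<le> L"
    and w: "w \<noteq> []" "set w \<subseteq> {A, B}" and Lw: "spectral_radius (word_prod d w) = L ^ length w"
  shows "joint_spectral_radius d {A, B} = L"
proof -
  have d: "0 < d" by (rule rank_one_dim_pos[OF A rank])
  have L: "0 \<le> L" using spectral_radius_nonneg[OF B d] LB by linarith
  have "\<forall>k. \<exists>t. A * B ^\<^sub>m k * A = t \<cdot>\<^sub>m A \<and> cmod t \<le> spectral_radius (A * B ^\<^sub>m k)"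
    using rank_one_sandwich[OF A rank pow_carrier_mat[OF B]] by blast
  moreover have "spectral_radius (A * B ^\<^sub>m k) \<le> L ^ (k + 1)" for k
  proof -
    have "spectral_radius (A * B ^\<^sub>m k) = (spectral_radius (A * B ^\<^sub>m k) powr (1 / real (k + 1))) ^ (k + 1)"
      by (rule spectral_radius_powr_inverse_power[symmetric, OF _ d]) (use A B in simp)
    also have "\<dots> \<le> L ^ (k + 1)" by (rule power_mono[OF LAB]) simp
    finally show ?thesis .
  qed
  ultimately obtain c where c: "\<And>k. A * B ^\<^sub>m k * A = c k \<cdot>\<^sub>m A"
    and c_bound: "\<And>k. cmod (c k) \<le> L ^ (k + 1)"
    by (metis order_trans)
  show ?thesis
  proof (rule joint_spectral_radius_eqI[OF _ _ L])
    fix r assume "L < r"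
    then have "spectral_radius B < r" using LB by linarith
    then obtain C where C: "0 < C" "\<And>k. frob_norm (B ^\<^sub>m k) \<le> C * r ^ k"
      using frob_norm_pow_mat_le[OF B d] by blast
    have "cmod (c k) \<le> r ^ (k + 1)" for k
      using c_bound[of k] power_mono[of L r "k + 1"] L \<open>L < r\<close> by linarith
    with C c \<open>L < r\<close> L show "\<exists>K>0. \<forall>ws. set ws \<subseteq> {A, B} \<longrightarrow> frob_norm (word_prod d ws) \<le> K * r ^ length ws"
      by (intro frob_norm_word_le[OF A B]) auto
  next
    assume "0 < L"
    with A B d w Lw show "\<exists>c>0. \<forall>n. \<exists>ws. length ws = n \<and> set ws \<subseteq> {A, B} \<and> c * L ^ n \<le> frob_norm (word_prod d ws)"
      by (intro word_prod_lower_bound) auto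
  qed auto
qed

lemma bounded_root_sequence_has_max:
  fixes a :: "nat \<Rightarrow> real"
  assumes nonneg: "\<And>n. 0 \<le> a n" and s: "0 < s" "s < a N"
    and bound: "\<And>n. a n ^ (n + 1) \<le> K * s ^ n"
  shows "\<exists>m. a N \<le> a m \<and> (\<forall>n. a n \<le> a m)"
proof -
  define q where "q = a N / s"
  have q: "1 < q" using s by (simp add: q_def)
  obtain n0 where n0: "K / a N < q ^ n0" using real_arch_pow[OF q] by blast
  have small: "n < n0" if "a N \<le> a n" for n
  proof (rule ccontr)
    assume "\<not> n < n0"
    then have "q ^ n0 \<le> q ^ n" using q by (intro power_increasing) auto
    have "a N * q ^ n * s ^ n = a N ^ (n + 1)" using s by (simp add: q_def power_divide)
    also have "\<dots> \<le> a n ^ (n + 1)" using that s by (intro power_mono) auto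
    also have "\<dots> \<le> K * s ^ n" by (rule bound)
    finally have "q ^ n \<le> K / a N" using s by (simp add: field_simps)
    with n0 \<open>q ^ n0 \<le> q ^ n\<close> show False by simp
  qed
  define T where "T = {n. a N \<le> a n}"
  have "finite T" using small unfolding T_def by (auto intro: finite_subset[of _ "{..<n0}"])
  then have "Max (a ` T) \<in> a ` T" by (intro Max_in) (auto simp: T_def)
  then obtain m where m: "m \<in> T" "a m = Max (a ` T)" by (metis imageE)
  show ?thesis
  proof (intro exI[of _ m] conjI allI)
    show "a N \<le> a m" using m(1) unfolding T_def by simp
    fix n
    show "a n \<le> a m"
    proof (cases "n \<in> T")
      case True
      then show ?thesis using m \<open>finite T\<close> by simp
    next
      case False
      then show ?thesis using m(1) unfolding T_def by simp
    qed
  qed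
qed

lemma spectral_radius_mult_pow_root_has_max:
  assumes A: "A \<in> carrier_mat d d" and B: "B \<in> carrier_mat d d" and d: "0 < d"
    and N: "spectral_radius B < spectral_radius (A * B ^\<^sub>m N) powr (1 / real (N + 1))"
  shows "\<exists>m. spectral_radius B < spectral_radius (A * B ^\<^sub>m m) powr (1 / real (m + 1)) \<and>
    (\<forall>n. spectral_radius (A * B ^\<^sub>m n) powr (1 / real (n + 1))
      \<le> spectral_radius (A * B ^\<^sub>m m) powr (1 / real (m + 1)))"
proof -
  define a where "a n = spectral_radius (A * B ^\<^sub>m n) powr (1 / real (n + 1))" for n
  define s where "s = (spectral_radius B + a N) / 2"
  have s: "spectral_radius B < s" "0 < s" "s < a N"
    using N spectral_radius_nonneg[OF B d] unfolding s_def a_def by auto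
  obtain C where C: "\<And>k. frob_norm (B ^\<^sub>m k) \<le> C * s ^ k"
    using frob_norm_pow_mat_le[OF B d s(1)] by blast
  have bound: "a n ^ (n + 1) \<le> (frob_norm A * C) * s ^ n" for n
  proof -
    have "a n ^ (n + 1) = spectral_radius (A * B ^\<^sub>m n)"
      unfolding a_def by (rule spectral_radius_powr_inverse_power[OF _ d]) (use A B in simp)
    also have "\<dots> \<le> frob_norm (A * B ^\<^sub>m n)"
      by (rule spectral_radius_le_frob_norm[OF _ d]) (use A B in simp)
    also have "\<dots> \<le> frob_norm A * frob_norm (B ^\<^sub>m n)"
      by (rule frob_norm_mult[OF A pow_carrier_mat[OF B]])
    also have "\<dots> \<le> (frob_norm A * C) * s ^ n"
      using C[of n] by (simp add: mult_left_mono frob_norm_nonneg mult.assoc)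
    finally show ?thesis .
  qed
  have "\<exists>m. a N \<le> a m \<and> (\<forall>n. a n \<le> a m)"
    by (rule bounded_root_sequence_has_max[OF _ s(2,3) bound]) (simp add: a_def)
  then obtain m where "a N \<le> a m" "\<forall>n. a n \<le> a m" by blast
  moreover from this(1) s(1,3) have "spectral_radius B < a m" by linarith
  ultimately show ?thesis unfolding a_def by blast
qed

theorem corollary4:
  fixes A B :: "complex mat" and d :: nat
  assumes "A \<in> carrier_mat d d" and "B \<in> carrier_mat d d"
    and "vec_space.rank d A = 1"
  shows "joint_spectral_radius d {A, B} = spectral_radius B \<or>
    (\<exists>n::nat. joint_spectral_radius d {A, B} = spectral_radius (A * B ^\<^sub>m n) powr (1 / real (n + 1)))"
proof -
  note A = assms(1) and B = assms(2) and rank = assms(3)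
  have d: "0 < d" by (rule rank_one_dim_pos[OF A rank])
  define a where "a n = spectral_radius (A * B ^\<^sub>m n) powr (1 / real (n + 1))" for n
  show ?thesis
  proof (cases "\<forall>n. a n \<le> spectral_radius B")
    case True
    then have "joint_spectral_radius d {A, B} = spectral_radius B"
      using B by (intro joint_spectral_radius_rank_one_eq[OF A B rank, where w = "[B]"]) (auto simp: a_def)
    then show ?thesis ..
  next
    case False
    then obtain N where "spectral_radius B < a N" by (auto simp: not_le)
    then obtain m where m: "spectral_radius B < a m" "\<And>n. a n \<le> a m"
      using spectral_radius_mult_pow_root_has_max[OF A B d] unfolding a_def by blast
    have "a m ^ (m + 1) = spectral_radius (A * B ^\<^sub>m m)"
      unfolding a_def by (rule spectral_radius_powr_inverse_power[OF _ d]) (use A B in simp)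
    then have "spectral_radius (word_prod d (A # replicate m B)) = a m ^ length (A # replicate m B)"
      using B by (simp add: word_prod_replicate)
    then have "joint_spectral_radius d {A, B} = a m"
      using m by (intro joint_spectral_radius_rank_one_eq[OF A B rank, where w = "A # replicate m B"])
        (auto simp: a_def)
    then show ?thesis unfolding a_def by blast
  qed
qed

end
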